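(* Let $\gamma>0$ or $\gamma<-1$, and let $\theta\in\mathbb R^d$. For a dataset $\mathcal D=\{(X_i,Y_i)\}_{i=1}^n\subset\mathbb R^d\times\{0,1\}$ define $$S_\gamma(\theta;\mathcal D)=\frac1n\sum_{i=1}^n\Big[\frac{\exp\{(\gamma+1)Y_i\theta^\top X_i\}}{1+\exp\{(\gamma+1)\theta^\top X_i\}}\Big]^{\frac{\gamma}{\gamma+1}}\Big\{Y_i-\frac{\exp\{(\gamma+1)\theta^\top X_i\}}{1+\exp\{(\gamma+1)\theta^\top X_i\}}\Big\}X_i.$$ Then $\sup_{\mathcal D}|\theta^\top S_\gamma(\theta;\mathcal D)|<\infty$, where the supremum is over all $n\ge1$ and all datasets $\mathcal D$.
   Context: $S_\gamma(\theta;\mathcal D)$ is the $\gamma$-estimating function (with the counting measure on $\{0,1\}$ as reference measure) for the binary logistic model $p(y|x,\theta)=\exp(y\theta^\top x)/(1+\exp(\theta^\top x))$. *)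

theory Defs
  imports "HOL-Analysis.Analysis"
begin

definition S_gamma :: "real \<Rightarrow> real^'d \<Rightarrow> nat \<Rightarrow> (nat \<Rightarrow> real^'d) \<Rightarrow> (nat \<Rightarrow> real) \<Rightarrow> real^'d" where
  "S_gamma \<gamma> \<theta> n X Y =
     (1 / real n) *\<^sub>R
       (\<Sum>i<n. ((exp ((\<gamma> + 1) * Y i * (\<theta> \<bullet> X i)) / (1 + exp ((\<gamma> + 1) * (\<theta> \<bullet> X i))))
                   powr (\<gamma> / (\<gamma> + 1))
                 * (Y i - exp ((\<gamma> + 1) * (\<theta> \<bullet> X i)) / (1 + exp ((\<gamma> + 1) * (\<theta> \<bullet> X i)))))
                *\<^sub>R X i)"

end

theory Submission
  imports Defs
begin

text \<open>Write \<open>\<sigma>(a) = e\<^sup>a / (1 + e\<^sup>a)\<close> and \<open>a = (\<gamma> + 1) \<theta>\<^sup>T X\<close>. For \<open>Y \<in> {0, 1}\<close> the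
  absolute value of the \<open>i\<close>-th weighted residual is \<open>\<sigma>(\<pm>a)\<^sup>c \<sigma>(\<mp>a)\<close> with
  \<open>c = \<gamma> / (\<gamma> + 1) > 0\<close>, and since \<open>\<sigma>(a) \<le> exp (min a 0)\<close> it decays like
  \<open>exp (- min c 1 \<bar>a\<bar>)\<close>. This exponential decay beats the linear factor \<open>\<theta>\<^sup>T X\<close>, so every
  summand of \<open>\<theta>\<^sup>T S\<^sub>\<gamma>\<close> is bounded by \<open>1 / (min c 1 \<bar>\<gamma> + 1\<bar>)\<close>, uniformly in the data,
  and so is their average.\<close>

definition logistic :: "real \<Rightarrow> real" where
  "logistic a = exp a / (1 + exp a)"

lemma logistic_pos: "0 < logistic a"
  by (simp add: logistic_def add_pos_pos)

lemma logistic_minus: "logistic (- a) = 1 / (1 + exp a)"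
  by (simp add: logistic_def exp_minus field_simps add_pos_pos)

lemma one_minus_logistic: "1 - logistic a = logistic (- a)"
proof -
  have "1 + exp a \<noteq> 0"
    using exp_gt_zero[of a] by linarith
  then show ?thesis
    unfolding logistic_minus by (simp add: logistic_def field_simps)
qed

lemma logistic_le_exp_min: "logistic a \<le> exp (min a 0)"
proof (cases "a \<ge> 0")
  case True
  then show ?thesis by (simp add: logistic_def divide_le_eq_1 add_pos_pos)
next
  case False
  then show ?thesis by (simp add: logistic_def divide_le_eq add_pos_pos)
qed

lemma logistic_powr_mult_logistic_minus_le:
  fixes c :: real
  assumes "c > 0"
  shows "logistic a powr c * logistic (- a) \<le> exp (- min c 1 * \<bar>a\<bar>)"
proof -
  have "logistic a powr c \<le> exp (min a 0) powr c"
    using assms logistic_pos[of a] logistic_le_exp_min[of a] by (intro powr_mono2) auto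
  also have "\<dots> = exp (c * min a 0)"
    by (simp add: powr_def)
  finally have "logistic a powr c * logistic (- a) \<le> exp (c * min a 0) * exp (min (- a) 0)"
    using logistic_pos[of "- a"] logistic_le_exp_min[of "- a"] by (intro mult_mono) auto
  also have "\<dots> = exp (c * min a 0 + min (- a) 0)"
    by (simp add: exp_add)
  also have "\<dots> \<le> exp (- min c 1 * \<bar>a\<bar>)"
    using assms by (auto simp: min_def abs_if mult_le_cancel_right)
  finally show ?thesis .
qed

lemma abs_mult_exp_neg_abs_le:
  fixes k t :: real
  assumes "k > 0"
  shows "\<bar>t\<bar> * exp (- k * \<bar>t\<bar>) \<le> 1 / k"
proof -
  define u where "u = k * \<bar>t\<bar>"
  have "u \<le> exp u"
    using exp_ge_add_one_self[of u] by linarith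
  then have "u * exp (- u) \<le> 1"
    by (simp add: exp_minus field_simps)
  then show ?thesis
    using assms unfolding u_def by (simp add: field_simps)
qed

lemma bernoulli_weighted_residual_le:
  fixes c y a :: real
  assumes "c > 0" and "y \<in> {0, 1}"
  shows "\<bar>(exp (y * a) / (1 + exp a)) powr c * (y - logistic a)\<bar> \<le> exp (- min c 1 * \<bar>a\<bar>)"
proof (cases "y = 1")
  case True
  then show ?thesis
    using logistic_powr_mult_logistic_minus_le[OF assms(1), of a] logistic_pos[of "- a"]
    by (simp add: one_minus_logistic flip: logistic_def)
next
  case False
  with assms(2) have "y = 0" by simp
  then show ?thesis
    using logistic_powr_mult_logistic_minus_le[OF assms(1), of "- a"] logistic_pos[of a]
    by (simp add: abs_mult flip: logistic_minus)
qed

lemma weighted_residual_times_score_le: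
  fixes c g y t :: real
  assumes "c > 0" and "g \<noteq> 0" and "y \<in> {0, 1}"
  shows "\<bar>(exp (g * y * t) / (1 + exp (g * t))) powr c
           * (y - exp (g * t) / (1 + exp (g * t))) * t\<bar> \<le> 1 / (min c 1 * \<bar>g\<bar>)"
proof -
  have "\<bar>(exp (g * y * t) / (1 + exp (g * t))) powr c * (y - exp (g * t) / (1 + exp (g * t))) * t\<bar>
      = \<bar>(exp (y * (g * t)) / (1 + exp (g * t))) powr c * (y - logistic (g * t))\<bar> * \<bar>t\<bar>"
    by (simp add: logistic_def abs_mult mult_ac)
  also have "\<dots> \<le> exp (- min c 1 * \<bar>g * t\<bar>) * \<bar>t\<bar>"
    using bernoulli_weighted_residual_le[OF assms(1,3)] by (intro mult_right_mono) auto
  also have "\<dots> = \<bar>t\<bar> * exp (- (min c 1 * \<bar>g\<bar>) * \<bar>t\<bar>)"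
    by (simp add: abs_mult mult_ac)
  also have "\<dots> \<le> 1 / (min c 1 * \<bar>g\<bar>)"
    using assms by (intro abs_mult_exp_neg_abs_le) auto
  finally show ?thesis .
qed

lemma abs_mean_le:
  fixes f :: "nat \<Rightarrow> real"
  assumes "n \<ge> 1" and "\<And>i. i < n \<Longrightarrow> \<bar>f i\<bar> \<le> B"
  shows "\<bar>(1 / real n) * (\<Sum>i<n. f i)\<bar> \<le> B"
proof -
  have "\<bar>\<Sum>i<n. f i\<bar> \<le> (\<Sum>i<n. \<bar>f i\<bar>)"
    by (rule sum_abs)
  also have "\<dots> \<le> real n * B"
    using sum_mono[of "{..<n}" "\<lambda>i. \<bar>f i\<bar>" "\<lambda>_. B"] assms(2) by simp
  finally show ?thesis
    using assms(1) by (simp add: abs_mult divide_le_eq mult.commute)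
qed

theorem mainTheorem8:
  fixes \<gamma> :: real and \<theta> :: "real^'d"
  assumes "\<gamma> > 0 \<or> \<gamma> < -1"
  shows "\<exists>M::real. \<forall>(n::nat) (X::nat \<Rightarrow> real^'d) (Y::nat \<Rightarrow> real).
            n \<ge> 1 \<longrightarrow> (\<forall>i<n. Y i \<in> {0, 1}) \<longrightarrow> \<bar>\<theta> \<bullet> S_gamma \<gamma> \<theta> n X Y\<bar> \<le> M"
proof (intro exI allI impI)
  define c where "c = \<gamma> / (\<gamma> + 1)"
  define g where "g = \<gamma> + 1"
  have "c > 0" and "g \<noteq> 0"
    using assms unfolding c_def g_def by (auto simp: divide_pos_pos divide_neg_neg)
  fix n :: nat and X :: "nat \<Rightarrow> real^'d" and Y :: "nat \<Rightarrow> real"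
  assume "n \<ge> 1" and Y: "\<forall>i<n. Y i \<in> {0, 1}"
  have "\<theta> \<bullet> S_gamma \<gamma> \<theta> n X Y = (1 / real n) * (\<Sum>i<n.
          (exp (g * Y i * (\<theta> \<bullet> X i)) / (1 + exp (g * (\<theta> \<bullet> X i)))) powr c
          * (Y i - exp (g * (\<theta> \<bullet> X i)) / (1 + exp (g * (\<theta> \<bullet> X i)))) * (\<theta> \<bullet> X i))"
    unfolding S_gamma_def c_def g_def by (simp add: inner_sum_right mult.assoc)
  also have "\<bar>\<dots>\<bar> \<le> 1 / (min c 1 * \<bar>g\<bar>)"
    using \<open>n \<ge> 1\<close> Y weighted_residual_times_score_le[OF \<open>c > 0\<close> \<open>g \<noteq> 0\<close>]
    by (intro abs_mean_le) auto
  finally show "\<bar>\<theta> \<bullet> S_gamma \<gamma> \<theta> n X Y\<bar> \<le> 1 / (min c 1 * \<bar>g\<bar>)" .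
qed

end
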